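(* Consider the multi-queue bandit under Q-ThS(match) as described in the context. For every $u\in[U]$ and every $t\ge1$, almost surely $$Q_u(t)-Q^*_u(t)\le\sum_{l=t-B_u(t)+1}^{t}\left(\mathsf E(l)+\sum_{k\ne k^*_u}\mathsf I_{uk}(l)\right),$$ where $B_u(t)=\min\{s\ge0:Q_u(t-s)=0\}$.
   Context: Discrete-time system with $U$ queues and $K$ servers, $1\le U\le K$. Arrivals $A_u(t)\in\{0,1\}$ to queue $u$ are Bernoulli($\lambda_u$), and the service $R_{uk}(t)\in\{0,1\}$ of server $k$ to queue $u$ is Bernoulli($\mu_{uk}$); all mutually independent and i.i.d. across slots. Each slot a matching is scheduled; $\kappa_u(t)$ is the server assigned to queue $u$, $S_u(t)=R_{u\kappa_u(t)}(t)$, $Q_u(t)=(Q_u(t-1)+A_u(t)-S_u(t))^+$. For each $u$, $k^*_u$ is the unique maximizer of $\mu_{uk}$ over $k$ (distinct across queues). The genie queue is $Q^*_u(t)=(Q^*_u(t-1)+A_u(t)-R_{uk^*_u}(t))^+$ with the same arrivals and services; $Q^*_u(0)\ge0$. $B_u(t)$ is the time elapsed since queue $u$ was last empty (time $t-B_u(t)$ is the last instant at or before $t$ with $Q_u=0$). Algorithm Q-ThS(match): at each time $l$ an independent Bernoulli exploration indicator $\mathsf E(l)$ (mean $\min\{1,3K\log^2l/l\}$) decides whether a matching is scheduled by exploration ($\mathsf E(l)=1$: uniformly random from a fixed set of $K$ matchings covering all pairs) or by exploitation (Thompson sampling with Beta posteriors, projected onto matchings). $\mathsf I_{uk}(l)$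 is the indicator that server $k$ is assigned to queue $u$ at time $l$ in an exploit step. *)

theory Defs
  imports "HOL-Analysis.Analysis"
begin

text \<open>Sample-path model. Queues are indexed by u < U, servers by k < K, time by nat.
  A matching at time l is a map sigma l : queues -> servers, injective on {..<U}.\<close>

definition is_matching :: "nat \<Rightarrow> nat \<Rightarrow> (nat \<Rightarrow> nat) \<Rightarrow> bool" where
  "is_matching U K m \<longleftrightarrow> (\<forall>u<U. m u < K) \<and> inj_on m {..<U}"

definition last_empty_gap :: "(nat \<Rightarrow> int) \<Rightarrow> nat \<Rightarrow> nat" where
  "last_empty_gap q t = (LEAST s. s \<le> t \<and> q (t - s) = 0)"

definition exploit_ind :: "(nat \<Rightarrow> nat) \<Rightarrow> (nat \<Rightarrow> nat \<Rightarrow> nat) \<Rightarrow> nat \<Rightarrow> nat \<Rightarrow> nat \<Rightarrow> int" where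
  "exploit_ind E \<sigma> u k l = (if E l = 0 \<and> \<sigma> l u = k then 1 else 0)"

end

theory Submission
  imports Defs
begin

text \<open>On the current busy period of queue u the recursion for Q never hits the reflecting barrier 0,
  so Q decreases by exactly the service it receives while the genie queue decreases by at most
  the service of the best server. The gap Q - Q* therefore grows by at most R_{u k*_u} - S_u per
  slot, starting from a non-positive value at the last empty instant; and R_{u k*_u} - S_u \<le> 1 is
  positive only in slots where either exploration happens or an exploit step assigns a
  suboptimal server to u.\<close>

lemma last_empty_gap_le:
  assumes "q 0 = 0"
  shows "last_empty_gap q t \<le> t" and "q (t - last_empty_gap q t) = 0"
proof -
  have "\<exists>s. s \<le> t \<and> q (t - s) = 0" using assms by (intro exI[of _ t]) simp
  from LeastI_ex[OF this] show "last_empty_gap q t \<le> t" and "q (t - last_empty_gap q t) = 0"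
    unfolding last_empty_gap_def by auto
qed

lemma nonzero_before_last_empty_gap:
  assumes "s < last_empty_gap q t" "s \<le> t"
  shows "q (t - s) \<noteq> 0"
proof
  assume "q (t - s) = 0"
  with assms have "last_empty_gap q t \<le> s"
    unfolding last_empty_gap_def by (intro Least_le) simp
  with assms show False by simp
qed

lemma lindley_diff_le_sum:
  fixes q qs a s ss c :: "nat \<Rightarrow> int"
  assumes q_rec: "\<And>l. q (Suc l) = max 0 (q l + a (Suc l) - s (Suc l))"
    and qs_rec: "\<And>l. qs (Suc l) = max 0 (qs l + a (Suc l) - ss (Suc l))"
    and q_start: "q m = 0"
    and qs_start: "qs m \<ge> 0"
    and busy: "\<And>l. m < l \<Longrightarrow> l \<le> m + j \<Longrightarrow> q l \<noteq> 0"
    and deficit: "\<And>l. ss l - s l \<le> c l"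
  shows "q (m + j) - qs (m + j) \<le> (\<Sum>l = m + 1 .. m + j. c l)"
  using busy
proof (induction j)
  case 0
  then show ?case using q_start qs_start by simp
next
  case (Suc j)
  let ?l = "Suc (m + j)"
  have "q ?l \<noteq> 0" using Suc.prems[of ?l] by simp
  then have q_step: "q ?l = q (m + j) + a ?l - s ?l"
    using q_rec[of "m + j"] by (auto simp: max_def split: if_splits)
  have qs_step: "qs ?l \<ge> qs (m + j) + a ?l - ss ?l"
    using qs_rec[of "m + j"] by simp
  have "q (m + j) - qs (m + j) \<le> (\<Sum>l = m + 1 .. m + j. c l)"
    using Suc.IH Suc.prems by simp
  then show ?case
    using q_step qs_step deficit[of ?l] by (simp add: sum.cl_ivl_Suc)
qed

lemma exploit_ind_nonneg: "0 \<le> exploit_ind E \<sigma> u k l"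
  by (simp add: exploit_ind_def)

lemma exploit_ind_sum_ge_one:
  assumes "E l = 0" "\<sigma> l u \<in> S" "finite S"
  shows "1 \<le> (\<Sum>k\<in>S. exploit_ind E \<sigma> u k l)"
proof -
  have "exploit_ind E \<sigma> u (\<sigma> l u) l = 1" using assms(1) by (simp add: exploit_ind_def)
  moreover have "exploit_ind E \<sigma> u (\<sigma> l u) l \<le> (\<Sum>k\<in>S. exploit_ind E \<sigma> u k l)"
    using assms(2,3) by (intro member_le_sum) (simp_all add: exploit_ind_nonneg)
  ultimately show ?thesis by simp
qed

lemma service_deficit_le:
  fixes R :: "nat \<Rightarrow> nat \<Rightarrow> int"
  assumes R01: "\<And>k. R k l \<in> {0, 1}"
    and E01: "E l \<in> {0, 1}"
    and server: "\<sigma> l u < K"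
  shows "R ks l - R (\<sigma> l u) l \<le> int (E l) + (\<Sum>k\<in>{..<K} - {ks}. exploit_ind E \<sigma> u k l)"
proof (cases "\<sigma> l u = ks")
  case True
  then show ?thesis by (simp add: sum_nonneg exploit_ind_nonneg)
next
  case False
  have "R ks l - R (\<sigma> l u) l \<le> 1" using R01[of ks] R01[of "\<sigma> l u"] by auto
  moreover have "1 \<le> int (E l) + (\<Sum>k\<in>{..<K} - {ks}. exploit_ind E \<sigma> u k l)"
  proof (cases "E l = 1")
    case True
    then show ?thesis by (simp add: sum_nonneg exploit_ind_nonneg)
  next
    case False
    with E01 have "E l = 0" by simp
    with server \<open>\<sigma> l u \<noteq> ks\<close> show ?thesis
      using exploit_ind_sum_ge_one[of E l \<sigma> u "{..<K} - {ks}"] by simp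
  qed
  ultimately show ?thesis by linarith
qed

theorem lemma3:
  fixes U K :: nat
    and A :: "nat \<Rightarrow> nat \<Rightarrow> int"          \<comment> \<open>A u t\<close>
    and R :: "nat \<Rightarrow> nat \<Rightarrow> nat \<Rightarrow> int"  \<comment> \<open>R u k t\<close>
    and \<mu> :: "nat \<Rightarrow> nat \<Rightarrow> real"
    and kstar :: "nat \<Rightarrow> nat"
    and E :: "nat \<Rightarrow> nat"                  \<comment> \<open>exploration indicator E(l)\<close>
    and \<sigma> :: "nat \<Rightarrow> nat \<Rightarrow> nat"            \<comment> \<open>\<sigma> l u = \<kappa>_u(l)\<close>
    and Xs :: "(nat \<Rightarrow> nat) set"          \<comment> \<open>fixed exploration matchings\<close>
    and Q Qs :: "nat \<Rightarrow> nat \<Rightarrow> int"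
    and u t :: nat
  assumes UK: "1 \<le> U" "U \<le> K"
    and A01: "\<And>v l. A v l \<in> {0, 1}"
    and R01: "\<And>v k l. R v k l \<in> {0, 1}"
    and kstar_range: "\<And>v. v < U \<Longrightarrow> kstar v < K"
    and kstar_max: "\<And>v k. v < U \<Longrightarrow> k < K \<Longrightarrow> k \<noteq> kstar v \<Longrightarrow> \<mu> v k < \<mu> v (kstar v)"
    and kstar_distinct: "inj_on kstar {..<U}"
    and Xs_card: "card Xs = K"
    and Xs_match: "\<And>m. m \<in> Xs \<Longrightarrow> is_matching U K m"
    and Xs_cover: "\<And>v k. v < U \<Longrightarrow> k < K \<Longrightarrow> \<exists>m\<in>Xs. m v = k"
    and E01: "\<And>l. E l \<in> {0, 1}"
    and sched: "\<And>l. is_matching U K (\<sigma> l)"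
    and explore: "\<And>l. E l = 1 \<Longrightarrow> \<sigma> l \<in> Xs"
    and Q0: "\<And>v. Q v 0 = 0"
    and Qrec: "\<And>v l. Q v (Suc l) = max 0 (Q v l + A v (Suc l) - R v (\<sigma> (Suc l) v) (Suc l))"
    and Qs0: "\<And>v. Qs v 0 \<ge> 0"
    and Qsrec: "\<And>v l. Qs v (Suc l) = max 0 (Qs v l + A v (Suc l) - R v (kstar v) (Suc l))"
    and u: "u < U"
    and t: "1 \<le> t"
  shows "Q u t - Qs u t \<le>
    (\<Sum>l = t - last_empty_gap (Q u) t + 1 .. t.
        int (E l) + (\<Sum>k\<in>{..<K} - {kstar u}. exploit_ind E \<sigma> u k l))"
proof -
  define B where "B = last_empty_gap (Q u) t"
  have B_le: "B \<le> t" and empty_at: "Q u (t - B) = 0"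
    using last_empty_gap_le[of "Q u" t] Q0 by (simp_all add: B_def)
  have busy: "Q u l \<noteq> 0" if "t - B < l" "l \<le> t - B + B" for l
    using nonzero_before_last_empty_gap[of "t - l" "Q u" t] that B_le by (simp add: B_def)
  have Qs_nonneg: "Qs u l \<ge> 0" for l by (cases l) (simp_all add: Qs0 Qsrec)
  have server: "\<sigma> l u < K" for l using sched[of l] u by (simp add: is_matching_def)
  have "Q u (t - B + B) - Qs u (t - B + B)
      \<le> (\<Sum>l = t - B + 1 .. t - B + B. int (E l) + (\<Sum>k\<in>{..<K} - {kstar u}. exploit_ind E \<sigma> u k l))"
    using Qrec Qsrec empty_at Qs_nonneg busy
      service_deficit_le[of "R u" _ E \<sigma> u K "kstar u", OF R01 E01 server]
    by (intro lindley_diff_le_sum[where a = "A u"]) simp_all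
  with B_le show ?thesis by (simp add: B_def)
qed

end
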